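(* Let $\beta\ge 0$, and let $\pi^*_\beta=\{\pi^*_{h,\beta}\}_{h\in[H]}$ be a deterministic Markov optimal policy of the penalized machine MDP $\mathcal{M}^{\mathtt{M}}_\beta$, chosen greedily, i.e. $\pi^*_{h,\beta}(s)\in\arg\max_{a\in\bar{\mathcal{A}}}Q^*_{h,\beta}(s,a)$ for all $h,s$. Then for every $s\in\mathcal{S}$ and $h\in[H]$ with $\pi^*_{h,\beta}(s)\ne\text{defer}$, $$Q_h^*\big(s,\pi^*_{h,\beta}(s)\big)-V_h^{\pi^{\mathtt{H}}}(s)\ \ge\ \beta,$$ where $Q^*_h$ is the optimal $Q$-function of the unpenalized machine MDP $\mathcal{M}^{\mathtt{M}}$ and $V_h^{\pi^{\mathtt{H}}}$ is the value (in $\mathcal{M}^{\mathtt{M}}$) of the machine policy that always chooses defer.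
   Context: A human acts in a finite-horizon episodic MDP with finite state set $\mathcal{S}$, finite action set $\mathcal{A}$, horizon $H$, time-dependent transition kernel $p_h(s'\mid s,a)$ and time-dependent reward $r_h(s,a)\in[0,1]$, $h\in[H]$. The human follows a fixed stochastic policy $\pi^{\mathtt{H}}$ with $\pi^{\mathtt{H}}_h(a\mid s)<1$. The machine chooses advice $a^{\mathtt{M}}\in\bar{\mathcal{A}}:=\mathcal{A}\cup\{\text{defer}\}$; with adherence $\theta:\mathcal{S}\times\mathcal{A}\to[0,1]$, the human's action satisfies $\mathbb{P}_h(a^{\mathtt{H}}=a\mid s,\text{defer})=\pi^{\mathtt{H}}_h(a\mid s)$, and for $a^{\mathtt{M}}\ne\text{defer}$: $\mathbb{P}_h(a^{\mathtt{H}}=a^{\mathtt{M}}\mid s,a^{\mathtt{M}})=\theta(s,a^{\mathtt{M}})$ and $\mathbb{P}_h(a^{\mathtt{H}}=a\mid s,a^{\mathtt{M}})=(1-\theta(s,a^{\mathtt{M}}))\pi^{\mathtt{H}}_h(a\mid s)/(1-\pi^{\mathtt{H}}_h(a^{\mathtt{M}}\mid s))$ for $a\ne a^{\mathtt{M}}$. The machine's MDP $\mathcal{M}^{\mathtt{M}}$ has states $\mathcal{S}$, actions $\bar{\mathcal{A}}$, transition $p^{\mathtt{M}}_h(s'\mid s,a^{\mathtt{M}})=\sum_{a}p_h(s'\mid s,a)\mathbb{P}_h(a\mid s,a^{\mathtt{M}})$ and reward $r^{\mathtt{M}}_h(s,a^{\mathtt{M}})=\sum_a r_h(s,a)\mathbb{P}_h(a\mid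 s,a^{\mathtt{M}})$. Values of deterministic Markov policies $\pi$ are $V^\pi_h(s)=\mathbb{E}[\sum_{h'=h}^H r^{\mathtt{M}}_{h'}(s_{h'},\pi_{h'}(s_{h'}))\mid s_h=s]$, $V^\pi_{H+1}\equiv 0$; $V^*_h=\max_\pi V^\pi_h$ and $Q^*_h(s,a)=r^{\mathtt{M}}_h(s,a)+\sum_{s'}p^{\mathtt{M}}_h(s'\mid s,a)V^*_{h+1}(s')$. The penalized MDP $\mathcal{M}^{\mathtt{M}}_\beta$ is identical to $\mathcal{M}^{\mathtt{M}}$ except its reward is $r^{\mathtt{M}}_{h,\beta}(s,a)=r^{\mathtt{M}}_h(s,a)-\beta\,\mathbb{I}\{a\ne\text{defer}\}$; $V^*_{h,\beta}$ and $Q^*_{h,\beta}(s,a)=r^{\mathtt{M}}_{h,\beta}(s,a)+\sum_{s'}p^{\mathtt{M}}_h(s'\mid s,a)V^*_{h+1,\beta}(s')$ denote its optimal value and $Q$-functions. *)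

theory Defs
  imports Complex_Main
begin

text \<open>Advice space: None = defer, Some a = recommend action a.
  States 's and actions 'a are finite types. Time steps h range over {1..H}.\<close>

definition hprob :: "(nat \<Rightarrow> 's \<Rightarrow> 'a \<Rightarrow> real) \<Rightarrow> ('s \<Rightarrow> 'a \<Rightarrow> real)
    \<Rightarrow> nat \<Rightarrow> 's \<Rightarrow> 'a option \<Rightarrow> 'a \<Rightarrow> real" where
  "hprob piH theta h s am a = (case am of
      None \<Rightarrow> piH h s a
    | Some b \<Rightarrow> (if a = b then theta s b
                 else (1 - theta s b) * piH h s a / (1 - piH h s b)))"

definition pM :: "(nat \<Rightarrow> 's \<Rightarrow> 'a::finite \<Rightarrow> 's \<Rightarrow> real) \<Rightarrow> (nat \<Rightarrow> 's \<Rightarrow> 'a \<Rightarrow> real)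
    \<Rightarrow> ('s \<Rightarrow> 'a \<Rightarrow> real) \<Rightarrow> nat \<Rightarrow> 's \<Rightarrow> 'a option \<Rightarrow> 's \<Rightarrow> real" where
  "pM p piH theta h s am s' = (\<Sum>a\<in>UNIV. p h s a s' * hprob piH theta h s am a)"

definition rM :: "(nat \<Rightarrow> 's \<Rightarrow> 'a::finite \<Rightarrow> real) \<Rightarrow> (nat \<Rightarrow> 's \<Rightarrow> 'a \<Rightarrow> real)
    \<Rightarrow> ('s \<Rightarrow> 'a \<Rightarrow> real) \<Rightarrow> nat \<Rightarrow> 's \<Rightarrow> 'a option \<Rightarrow> real" where
  "rM r piH theta h s am = (\<Sum>a\<in>UNIV. r h s a * hprob piH theta h s am a)"

definition rMb :: "real \<Rightarrow> (nat \<Rightarrow> 's \<Rightarrow> 'b option \<Rightarrow> real) \<Rightarrow> nat \<Rightarrow> 's \<Rightarrow> 'b option \<Rightarrow> real" where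
  "rMb \<beta> R h s am = R h s am - \<beta> * (if am = None then 0 else 1)"

primrec Veval :: "nat \<Rightarrow> (nat \<Rightarrow> 's::finite \<Rightarrow> 'b \<Rightarrow> real) \<Rightarrow> (nat \<Rightarrow> 's \<Rightarrow> 'b \<Rightarrow> 's \<Rightarrow> real)
    \<Rightarrow> (nat \<Rightarrow> 's \<Rightarrow> 'b) \<Rightarrow> nat \<Rightarrow> 's \<Rightarrow> real" where
  "Veval 0 R P \<pi> h s = 0"
| "Veval (Suc k) R P \<pi> h s =
     R h s (\<pi> h s) + (\<Sum>s'\<in>UNIV. P h s (\<pi> h s) s' * Veval k R P \<pi> (Suc h) s')"

definition Vpi :: "nat \<Rightarrow> (nat \<Rightarrow> 's::finite \<Rightarrow> 'b \<Rightarrow> real) \<Rightarrow> (nat \<Rightarrow> 's \<Rightarrow> 'b \<Rightarrow> 's \<Rightarrow> real)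
    \<Rightarrow> (nat \<Rightarrow> 's \<Rightarrow> 'b) \<Rightarrow> nat \<Rightarrow> 's \<Rightarrow> real" where
  "Vpi H R P \<pi> h s = Veval (Suc H - h) R P \<pi> h s"

definition Vstar :: "nat \<Rightarrow> (nat \<Rightarrow> 's::finite \<Rightarrow> 'b \<Rightarrow> real) \<Rightarrow> (nat \<Rightarrow> 's \<Rightarrow> 'b \<Rightarrow> 's \<Rightarrow> real)
    \<Rightarrow> nat \<Rightarrow> 's \<Rightarrow> real" where
  "Vstar H R P h s = Sup {Vpi H R P \<pi> h s | \<pi>. True}"

definition Qstar :: "nat \<Rightarrow> (nat \<Rightarrow> 's::finite \<Rightarrow> 'b \<Rightarrow> real) \<Rightarrow> (nat \<Rightarrow> 's \<Rightarrow> 'b \<Rightarrow> 's \<Rightarrow> real)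
    \<Rightarrow> nat \<Rightarrow> 's \<Rightarrow> 'b \<Rightarrow> real" where
  "Qstar H R P h s b = R h s b + (\<Sum>s'\<in>UNIV. P h s b s' * Vstar H R P (Suc h) s')"

end

theory Submission
  imports Defs
begin

text \<open>Deferring costs no penalty, so the human's value is the same in the penalised MDP and is
  bounded there by the penalised \<open>Q\<^sup>*\<close> of deferring, hence by that of the greedy advice
  \<open>a \<noteq> defer\<close>. Penalising rewards can only lower optimal values, so this penalised \<open>Q\<^sup>*\<close> of
  \<open>a\<close> is at most the unpenalised one minus the immediate penalty \<open>\<beta>\<close>.\<close>

lemma hprob_nonneg:
  assumes "\<And>a. piH h s a \<ge> 0" "\<And>a. piH h s a < 1" "\<And>b. 0 \<le> theta s b \<and> theta s b \<le> 1"
  shows "hprob piH theta h s am a \<ge> 0"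
proof (cases am)
  case None
  then show ?thesis using assms by (simp add: hprob_def)
next
  case (Some b)
  have "(1 - theta s b) * piH h s a / (1 - piH h s b) \<ge> 0"
    using assms(1)[of a] assms(2)[of b] assms(3)[of b] by simp
  then show ?thesis using Some assms(3)[of b] by (simp add: hprob_def)
qed

lemma sum_hprob:
  fixes piH :: "nat \<Rightarrow> 's \<Rightarrow> 'a::finite \<Rightarrow> real"
  assumes "\<And>a. piH h s a < 1" "(\<Sum>a\<in>UNIV. piH h s a) = 1"
  shows "(\<Sum>a\<in>UNIV. hprob piH theta h s am a) = 1"
proof (cases am)
  case None
  then show ?thesis using assms by (simp add: hprob_def)
next
  case (Some b)
  have "(\<Sum>a\<in>UNIV. hprob piH theta h s am a)
      = theta s b + (1 - theta s b) / (1 - piH h s b) * (\<Sum>a\<in>UNIV-{b}. piH h s a)"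
    using Some by (simp add: hprob_def sum.remove[of UNIV b] sum_distrib_left)
  also have "(\<Sum>a\<in>UNIV-{b}. piH h s a) = 1 - piH h s b"
    using assms(2) by (simp add: sum.remove[of UNIV b])
  finally show ?thesis using assms(1)[of b] by simp
qed

lemma Vpi_step:
  assumes "h \<in> {1..H}"
  shows "Vpi H R P \<pi> h s = R h s (\<pi> h s) + (\<Sum>s'\<in>UNIV. P h s (\<pi> h s) s' * Vpi H R P \<pi> (Suc h) s')"
proof -
  have "Suc H - h = Suc (H - h)" "Suc H - Suc h = H - h" using assms by auto
  then show ?thesis unfolding Vpi_def by simp
qed

lemma Veval_rMb_defer: "Veval k (rMb \<beta> R) P (\<lambda>_ _. None) h s = Veval k R P (\<lambda>_ _. None) h s"
  by (induction k arbitrary: h s) (simp_all add: rMb_def)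

lemma Vpi_rMb_defer: "Vpi H (rMb \<beta> R) P (\<lambda>_ _. None) h s = Vpi H R P (\<lambda>_ _. None) h s"
  unfolding Vpi_def by (rule Veval_rMb_defer)

lemma rMb_le: "\<beta> \<ge> 0 \<Longrightarrow> rMb \<beta> R h s b \<le> R h s b"
  by (simp add: rMb_def)

text \<open>The reward bound only serves to keep the policy values bounded above, so that the \<open>Sup\<close>
  in \<open>Vstar\<close> is a genuine supremum and not an unspecified value.\<close>

locale bounded_mdp =
  fixes H :: nat
    and R :: "nat \<Rightarrow> 's::finite \<Rightarrow> 'b \<Rightarrow> real"
    and P :: "nat \<Rightarrow> 's \<Rightarrow> 'b \<Rightarrow> 's \<Rightarrow> real"
  assumes P_nonneg: "h \<in> {1..H} \<Longrightarrow> P h s b s' \<ge> 0"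
    and P_sum: "h \<in> {1..H} \<Longrightarrow> (\<Sum>s'\<in>UNIV. P h s b s') = 1"
    and R_le_1: "h \<in> {1..H} \<Longrightarrow> R h s b \<le> 1"
begin

lemma Veval_le_steps: "1 \<le> h \<Longrightarrow> k \<le> Suc H - h \<Longrightarrow> Veval k R P \<pi> h s \<le> real k"
proof (induction k arbitrary: h s)
  case 0
  then show ?case by simp
next
  case (Suc k)
  then have h: "h \<in> {1..H}" by auto
  have "(\<Sum>s'\<in>UNIV. P h s (\<pi> h s) s' * Veval k R P \<pi> (Suc h) s')
        \<le> (\<Sum>s'\<in>UNIV. P h s (\<pi> h s) s' * real k)"
    by (intro sum_mono mult_left_mono Suc.IH) (use Suc.prems P_nonneg[OF h] in auto)
  also have "\<dots> = real k"
    using P_sum[OF h] by (simp add: sum_distrib_right[symmetric])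
  finally show ?case using R_le_1[OF h, of s "\<pi> h s"] by simp
qed

lemma Vpi_le_horizon: "1 \<le> h \<Longrightarrow> Vpi H R P \<pi> h s \<le> real (Suc H - h)"
  unfolding Vpi_def by (rule Veval_le_steps) auto

lemma bdd_above_Vpi: "1 \<le> h \<Longrightarrow> bdd_above {Vpi H R P \<pi> h s | \<pi>. True}"
  using Vpi_le_horizon unfolding bdd_above_def by blast

lemma Vpi_le_Vstar: "1 \<le> h \<Longrightarrow> Vpi H R P \<pi> h s \<le> Vstar H R P h s"
  unfolding Vstar_def by (rule cSup_upper) (use bdd_above_Vpi in auto)

lemma Vpi_le_Qstar:
  assumes h: "h \<in> {1..H}"
  shows "Vpi H R P \<pi> h s \<le> Qstar H R P h s (\<pi> h s)"
proof -
  have "(\<Sum>s'\<in>UNIV. P h s (\<pi> h s) s' * Vpi H R P \<pi> (Suc h) s')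
        \<le> (\<Sum>s'\<in>UNIV. P h s (\<pi> h s) s' * Vstar H R P (Suc h) s')"
    by (intro sum_mono mult_left_mono Vpi_le_Vstar P_nonneg[OF h]) simp
  then show ?thesis unfolding Vpi_step[OF h] Qstar_def by simp
qed

lemma Veval_mono_reward:
  assumes "\<And>h s b. h \<in> {1..H} \<Longrightarrow> R' h s b \<le> R h s b"
  shows "1 \<le> h \<Longrightarrow> k \<le> Suc H - h \<Longrightarrow> Veval k R' P \<pi> h s \<le> Veval k R P \<pi> h s"
proof (induction k arbitrary: h s)
  case 0
  then show ?case by simp
next
  case (Suc k)
  then have h: "h \<in> {1..H}" by auto
  have "(\<Sum>s'\<in>UNIV. P h s (\<pi> h s) s' * Veval k R' P \<pi> (Suc h) s')
        \<le> (\<Sum>s'\<in>UNIV. P h s (\<pi> h s) s' * Veval k R P \<pi> (Suc h) s')"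
    by (intro sum_mono mult_left_mono Suc.IH) (use Suc.prems P_nonneg[OF h] in auto)
  then show ?case using assms[OF h, of s "\<pi> h s"] by simp
qed

lemma Vstar_mono_reward:
  assumes "\<And>h s b. h \<in> {1..H} \<Longrightarrow> R' h s b \<le> R h s b" and "1 \<le> h"
  shows "Vstar H R' P h s \<le> Vstar H R P h s"
  unfolding Vstar_def
proof (rule cSup_least)
  show "{Vpi H R' P \<pi> h s | \<pi>. True} \<noteq> {}" by auto
next
  fix x assume "x \<in> {Vpi H R' P \<pi> h s | \<pi>. True}"
  then obtain \<pi> where x: "x = Vpi H R' P \<pi> h s" by auto
  have "x \<le> Vpi H R P \<pi> h s"
    unfolding x Vpi_def by (rule Veval_mono_reward) (use assms in auto)
  also have "\<dots> \<le> Vstar H R P h s"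
    by (rule Vpi_le_Vstar[OF assms(2)])
  finally show "x \<le> Sup {Vpi H R P \<pi> h s | \<pi>. True}"
    unfolding Vstar_def .
qed

end

lemma bounded_mdp_rMb:
  assumes "bounded_mdp H R P" "\<beta> \<ge> 0"
  shows "bounded_mdp H (rMb \<beta> R) P"
  using assms unfolding bounded_mdp_def by (meson order_trans rMb_le)

lemma Qstar_rMb_le:
  assumes "bounded_mdp H R P" "\<beta> \<ge> 0" "h \<in> {1..H}" "b \<noteq> None"
  shows "Qstar H (rMb \<beta> R) P h s b \<le> Qstar H R P h s b - \<beta>"
proof -
  interpret bounded_mdp H R P by (rule assms(1))
  have "(\<Sum>s'\<in>UNIV. P h s b s' * Vstar H (rMb \<beta> R) P (Suc h) s')
        \<le> (\<Sum>s'\<in>UNIV. P h s b s' * Vstar H R P (Suc h) s')"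
    by (intro sum_mono mult_left_mono Vstar_mono_reward rMb_le P_nonneg) (use assms in auto)
  moreover have "rMb \<beta> R h s b = R h s b - \<beta>"
    using assms(4) by (auto simp: rMb_def)
  ultimately show ?thesis unfolding Qstar_def by simp
qed

lemma bounded_mdp_machine:
  fixes p :: "nat \<Rightarrow> 's::finite \<Rightarrow> 'a::finite \<Rightarrow> 's \<Rightarrow> real"
  assumes p_nonneg: "\<And>h s a s'. h \<in> {1..H} \<Longrightarrow> p h s a s' \<ge> 0"
    and p_sum: "\<And>h s a. h \<in> {1..H} \<Longrightarrow> (\<Sum>s'\<in>UNIV. p h s a s') = 1"
    and r_le_1: "\<And>h s a. h \<in> {1..H} \<Longrightarrow> r h s a \<le> 1"
    and piH_nonneg: "\<And>h s a. h \<in> {1..H} \<Longrightarrow> piH h s a \<ge> 0"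
    and piH_lt1: "\<And>h s a. h \<in> {1..H} \<Longrightarrow> piH h s a < 1"
    and piH_sum: "\<And>h s. h \<in> {1..H} \<Longrightarrow> (\<Sum>a\<in>UNIV. piH h s a) = 1"
    and theta_range: "\<And>s a. 0 \<le> theta s a \<and> theta s a \<le> 1"
  shows "bounded_mdp H (rM r piH theta) (pM p piH theta)"
proof
  fix h s am s'
  assume h: "h \<in> {1..H}"
  have hprob_nn: "hprob piH theta h s am a \<ge> 0" for a
    by (rule hprob_nonneg) (use piH_nonneg[OF h] piH_lt1[OF h] theta_range in auto)
  have hprob_sum: "(\<Sum>a\<in>UNIV. hprob piH theta h s am a) = 1"
    by (rule sum_hprob) (use piH_lt1[OF h] piH_sum[OF h] in auto)
  show "pM p piH theta h s am s' \<ge> 0"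
    unfolding pM_def by (intro sum_nonneg mult_nonneg_nonneg p_nonneg[OF h] hprob_nn)
  have "(\<Sum>s'\<in>UNIV. pM p piH theta h s am s')
      = (\<Sum>a\<in>UNIV. hprob piH theta h s am a * (\<Sum>s'\<in>UNIV. p h s a s'))"
    unfolding pM_def by (subst sum.swap) (simp add: sum_distrib_right mult.commute)
  then show "(\<Sum>s'\<in>UNIV. pM p piH theta h s am s') = 1"
    using p_sum[OF h] hprob_sum by simp
  have "rM r piH theta h s am \<le> (\<Sum>a\<in>UNIV. 1 * hprob piH theta h s am a)"
    unfolding rM_def by (intro sum_mono mult_right_mono r_le_1[OF h] hprob_nn)
  then show "rM r piH theta h s am \<le> 1"
    using hprob_sum by simp
qed

theorem proposition1:
  fixes H :: nat
    and p :: "nat \<Rightarrow> 's::finite \<Rightarrow> 'a::finite \<Rightarrow> 's \<Rightarrow> real"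
    and r :: "nat \<Rightarrow> 's \<Rightarrow> 'a \<Rightarrow> real"
    and piH :: "nat \<Rightarrow> 's \<Rightarrow> 'a \<Rightarrow> real"
    and theta :: "'s \<Rightarrow> 'a \<Rightarrow> real"
    and \<beta> :: real
    and pistar :: "nat \<Rightarrow> 's \<Rightarrow> 'a option"
  assumes p_nonneg: "\<And>h s a s'. h \<in> {1..H} \<Longrightarrow> p h s a s' \<ge> 0"
    and p_sum: "\<And>h s a. h \<in> {1..H} \<Longrightarrow> (\<Sum>s'\<in>UNIV. p h s a s') = 1"
    and r_range: "\<And>h s a. h \<in> {1..H} \<Longrightarrow> 0 \<le> r h s a \<and> r h s a \<le> 1"
    and piH_nonneg: "\<And>h s a. h \<in> {1..H} \<Longrightarrow> piH h s a \<ge> 0"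
    and piH_lt1: "\<And>h s a. h \<in> {1..H} \<Longrightarrow> piH h s a < 1"
    and piH_sum: "\<And>h s. h \<in> {1..H} \<Longrightarrow> (\<Sum>a\<in>UNIV. piH h s a) = 1"
    and theta_range: "\<And>s a. 0 \<le> theta s a \<and> theta s a \<le> 1"
    and beta_nonneg: "\<beta> \<ge> 0"
    and greedy: "\<And>h s b. h \<in> {1..H} \<Longrightarrow>
        Qstar H (rMb \<beta> (rM r piH theta)) (pM p piH theta) h s b
          \<le> Qstar H (rMb \<beta> (rM r piH theta)) (pM p piH theta) h s (pistar h s)"
  shows "\<forall>h\<in>{1..H}. \<forall>s. pistar h s \<noteq> None \<longrightarrow>
     Qstar H (rM r piH theta) (pM p piH theta) h s (pistar h s)
       - Vpi H (rM r piH theta) (pM p piH theta) (\<lambda>h s. None) h s \<ge> \<beta>"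
proof (intro ballI allI impI)
  fix h s
  assume h: "h \<in> {1..H}" and advice: "pistar h s \<noteq> None"
  define R where "R = rM r piH theta"
  define P where "P = pM p piH theta"
  have M: "bounded_mdp H R P"
    unfolding R_def P_def by (rule bounded_mdp_machine) (use assms in auto)
  interpret Mb: bounded_mdp H "rMb \<beta> R" P
    by (rule bounded_mdp_rMb[OF M beta_nonneg])
  have "Vpi H R P (\<lambda>_ _. None) h s = Vpi H (rMb \<beta> R) P (\<lambda>_ _. None) h s"
    by (rule Vpi_rMb_defer[symmetric])
  also have "\<dots> \<le> Qstar H (rMb \<beta> R) P h s None"
    using Mb.Vpi_le_Qstar[OF h, of "\<lambda>_ _. None"] by simp
  also have "\<dots> \<le> Qstar H (rMb \<beta> R) P h s (pistar h s)"
    using greedy[OF h] unfolding R_def P_def .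
  also have "\<dots> \<le> Qstar H R P h s (pistar h s) - \<beta>"
    by (rule Qstar_rMb_le[OF M beta_nonneg h advice])
  finally show "Qstar H (rM r piH theta) (pM p piH theta) h s (pistar h s)
       - Vpi H (rM r piH theta) (pM p piH theta) (\<lambda>h s. None) h s \<ge> \<beta>"
    unfolding R_def P_def by simp
qed

end
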